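(* The Schubert cell $S_{w_0,z_2}$ is the disjoint union of exactly four $G$-orbits of points $(P,Pw_0,Pz_2n)$: $n=n(0,1,1)$, dimension $8$, trivial stabilizer; $n=n(0,0,1)$, dimension $7$, stabilizer $\{d(1/a^2,a,a):a\in\mathbb{R}^\times\}$; $n=n(0,1,0)$, dimension $7$, stabilizer $\{d(a,1/a^2,a):a\in\mathbb{R}^\times\}$; $n=n(0,0,0)$, dimension $6$, stabilizer $D$.
   Context: $G=\mathrm{SL}_3(\mathbb{R})$, $P$ the upper triangular matrices in $G$, $D$ the diagonal matrices in $G$; $G$ acts on $X=(P\backslash G)^3$ by right multiplication in each coordinate. $n(x,y,z)=\begin{pmatrix}1&x&y\\0&1&z\\0&0&1\end{pmatrix}$, $d(a,b,c)=\operatorname{diag}(a,b,c)$. $w_0=\begin{pmatrix}0&0&-1\\0&-1&0\\-1&0&0\end{pmatrix}$, $z_2=\begin{pmatrix}0&0&1\\-1&0&0\\0&-1&0\end{pmatrix}$. $S_{v,w}=\big(\{P\}\times P\backslash PvP\times P\backslash PwP\big)\cdot G$. The stabilizer of $(P,Pv,Pwn)$ is $P\cap v^{-1}Pv\cap (wn)^{-1}P(wn)$. *)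

theory Defs
  imports "HOL-Analysis.Analysis"
begin

type_synonym mat3 = "real^3^3"

text \<open>G = SL_3(R), P = upper triangular matrices in G, D = diagonal matrices in G.
  Rows/columns are indexed by 1,2,3 :: 3; entry (i,j) is A $ i $ j.\<close>

definition SL3 :: "mat3 set" where
  "SL3 = {A. det A = 1}"

definition Bor :: "mat3 set" where
  "Bor = {A \<in> SL3. A $ 2 $ 1 = 0 \<and> A $ 3 $ 1 = 0 \<and> A $ 3 $ 2 = 0}"

definition Diag :: "mat3 set" where
  "Diag = {A \<in> SL3. \<forall>i j. i \<noteq> j \<longrightarrow> A $ i $ j = 0}"

definition nmat :: "real \<Rightarrow> real \<Rightarrow> real \<Rightarrow> mat3" where
  "nmat x y z = vector [vector [1, x, y], vector [0, 1, z], vector [0, 0, 1]]"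

definition dmat :: "real \<Rightarrow> real \<Rightarrow> real \<Rightarrow> mat3" where
  "dmat a b c = vector [vector [a, 0, 0], vector [0, b, 0], vector [0, 0, c]]"

definition w0 :: mat3 where
  "w0 = vector [vector [0, 0, -1], vector [0, -1, 0], vector [-1, 0, 0]]"

definition z2 :: mat3 where
  "z2 = vector [vector [0, 0, 1], vector [-1, 0, 0], vector [0, -1, 0]]"

text \<open>The right coset P g, a point of P\G.\<close>
definition rcos :: "mat3 \<Rightarrow> mat3 set" where
  "rcos g = (\<lambda>p. p ** g) ` Bor"

text \<open>Points of X = (P\G)^3.\<close>
type_synonym pt = "mat3 set \<times> mat3 set \<times> mat3 set"

definition Xsp :: "pt set" where
  "Xsp = {(rcos a, rcos b, rcos c) | a b c. a \<in> SL3 \<and> b \<in> SL3 \<and> c \<in> SL3}"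

definition act :: "pt \<Rightarrow> mat3 \<Rightarrow> pt" where
  "act x g = (case x of (A, B, C) \<Rightarrow>
      ((\<lambda>h. h ** g) ` A, (\<lambda>h. h ** g) ` B, (\<lambda>h. h ** g) ` C))"

definition orbit :: "pt \<Rightarrow> pt set" where
  "orbit x = act x ` SL3"

definition stab :: "pt \<Rightarrow> mat3 set" where
  "stab x = {g \<in> SL3. act x g = x}"

definition dcos :: "mat3 \<Rightarrow> mat3 set" where
  "dcos v = {p ** v ** q | p q. p \<in> Bor \<and> q \<in> Bor}"

definition schubert :: "mat3 \<Rightarrow> mat3 \<Rightarrow> pt set" where
  "schubert v w = {act (rcos (mat 1), rcos q1, rcos q2) g | q1 q2 g.
       q1 \<in> dcos v \<and> q2 \<in> dcos w \<and> g \<in> SL3}"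

text \<open>Tangent space at the identity (Lie algebra) of a matrix group H:
  velocities at 0 of curves through the identity staying locally in H.\<close>
definition lie_tangent :: "mat3 set \<Rightarrow> mat3 set" where
  "lie_tangent H = {X. \<exists>c e. e > 0 \<and> (\<forall>t. \<bar>t\<bar> < e \<longrightarrow> c t \<in> H) \<and>
       c 0 = mat 1 \<and> (c has_vector_derivative X) (at 0)}"

text \<open>Dimension of the orbit of x: dim G - dim Stab(x) (orbit x = Stab(x)\G).\<close>
definition orbit_dim :: "pt \<Rightarrow> nat" where
  "orbit_dim x = dim (lie_tangent SL3) - dim (lie_tangent (stab x))"

definition basept :: "mat3 \<Rightarrow> pt" where
  "basept n = (rcos (mat 1), rcos w0, rcos (z2 ** n))"

end

theory Submission imports Defs begin

text \<open>The first coordinate of a point of the cell can be moved to \<open>P\<close> and the second to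
  \<open>P w0\<close>; what remains of \<open>G\<close> is the common stabilizer \<open>P \<inter> w0\<inverse> P w0 = D\<close>.
  Modulo \<open>P\<close> on the left, every element of \<open>P z2 P\<close> can be written \<open>z2 n(0,y,z) d\<close>
  with \<open>d \<in> D\<close>, and the diagonal matrix \<open>diag(a,d,f)\<close> acts on the third coordinate by
  \<open>(y,z) \<mapsto> (y f/a, z f/d)\<close> (taking cube roots to reach determinant one).
  Hence the orbits are indexed by which of \<open>y, z\<close> vanish, and each stabilizer is the group of
  diagonal matrices fixing \<open>(y,z)\<close>; its Lie algebra has dimension \<open>0, 1, 1, 2\<close>, while that
  of \<open>SL\<^sub>3\<close> has dimension 8.\<close>

definition M3 :: "real \<Rightarrow> real \<Rightarrow> real \<Rightarrow> real \<Rightarrow> real \<Rightarrow> real \<Rightarrow> real \<Rightarrow> real \<Rightarrow> real \<Rightarrow> mat3" where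
  "M3 a b c d e f g h i = vector [vector [a, b, c], vector [d, e, f], vector [g, h, i]]"

lemma M3_nth [simp]:
  "M3 a b c d e f g h i $ 1 $ 1 = a" "M3 a b c d e f g h i $ 1 $ 2 = b" "M3 a b c d e f g h i $ 1 $ 3 = c"
  "M3 a b c d e f g h i $ 2 $ 1 = d" "M3 a b c d e f g h i $ 2 $ 2 = e" "M3 a b c d e f g h i $ 2 $ 3 = f"
  "M3 a b c d e f g h i $ 3 $ 1 = g" "M3 a b c d e f g h i $ 3 $ 2 = h" "M3 a b c d e f g h i $ 3 $ 3 = i"
  by (simp_all add: M3_def)

lemma M3_eta: "(A::mat3) = M3 (A$1$1) (A$1$2) (A$1$3) (A$2$1) (A$2$2) (A$2$3) (A$3$1) (A$3$2) (A$3$3)"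
  by (simp add: vec_eq_iff forall_3)

lemma M3_eq_iff [simp]: "M3 a b c d e f g h i = M3 a' b' c' d' e' f' g' h' i' \<longleftrightarrow>
   a = a' \<and> b = b' \<and> c = c' \<and> d = d' \<and> e = e' \<and> f = f' \<and> g = g' \<and> h = h' \<and> i = i'"
  by (auto simp: vec_eq_iff forall_3)

lemma M3_mult [simp]: "M3 a b c d e f g h i ** M3 a' b' c' d' e' f' g' h' i' =
  M3 (a*a'+b*d'+c*g') (a*b'+b*e'+c*h') (a*c'+b*f'+c*i')
     (d*a'+e*d'+f*g') (d*b'+e*e'+f*h') (d*c'+e*f'+f*i')
     (g*a'+h*d'+i*g') (g*b'+h*e'+i*h') (g*c'+h*f'+i*i')"
  by (simp add: vec_eq_iff forall_3 matrix_matrix_mult_def sum_3)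

lemma M3_det [simp]: "det (M3 a b c d e f g h i) = a*e*i + b*f*g + c*d*h - a*f*h - b*d*i - c*e*g"
  by (simp add: det_3)

lemma M3_scaleR [simp]:
  "r *\<^sub>R M3 a b c d e f g h i = M3 (r*a) (r*b) (r*c) (r*d) (r*e) (r*f) (r*g) (r*h) (r*i)"
  by (simp add: vec_eq_iff forall_3)

lemma M3_add [simp]: "M3 a b c d e f g h i + M3 a' b' c' d' e' f' g' h' i' =
  M3 (a+a') (b+b') (c+c') (d+d') (e+e') (f+f') (g+g') (h+h') (i+i')"
  by (simp add: vec_eq_iff forall_3)

lemma M3_inner [simp]: "M3 a b c d e f g h i \<bullet> M3 a' b' c' d' e' f' g' h' i' =
  a*a'+b*b'+c*c'+d*d'+e*e'+f*f'+g*g'+h*h'+i*i'"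
  by (simp add: inner_vec_def sum_3)

lemma zero_M3: "(0::mat3) = M3 0 0 0 0 0 0 0 0 0"
  by (simp add: vec_eq_iff forall_3)

lemma mat1_M3: "(mat 1 :: mat3) = M3 1 0 0 0 1 0 0 0 1"
  by (simp add: vec_eq_iff forall_3 mat_def)

lemma matrices_M3: "nmat x y z = M3 1 x y 0 1 z 0 0 1" "dmat a b c = M3 a 0 0 0 b 0 0 0 c"
  "w0 = M3 0 0 (-1) 0 (-1) 0 (-1) 0 0" "z2 = M3 0 0 1 (-1) 0 0 0 (-1) 0"
  by (simp_all add: nmat_def dmat_def w0_def z2_def M3_def)

lemma matrix_mul_right_cancel: "det (g::mat3) \<noteq> 0 \<Longrightarrow> A ** g = B ** g \<Longrightarrow> A = B"
  by (metis invertible_det_nz invertible_def matrix_mul_assoc matrix_mul_rid)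

subsection \<open>The Borel subgroup and its cosets\<close>

lemma Bor_iff: "A \<in> Bor \<longleftrightarrow> (\<exists>a b c d e f. A = M3 a b c 0 d e 0 0 f \<and> a*d*f = 1)"
proof
  assume "A \<in> Bor"
  then show "\<exists>a b c d e f. A = M3 a b c 0 d e 0 0 f \<and> a*d*f = 1"
    unfolding Bor_def SL3_def by (subst (asm) M3_eta[of A], subst M3_eta[of A]) auto
qed (auto simp: Bor_def SL3_def)

lemma Bor_subset_SL3: "Bor \<subseteq> SL3"
  by (auto simp: Bor_def)

lemma mat1_in_Bor: "mat 1 \<in> Bor"
  by (auto simp: Bor_iff mat1_M3)

lemma dmat_in_Bor: "a*d*f = 1 \<Longrightarrow> dmat a d f \<in> Bor"
  by (auto simp: Bor_iff matrices_M3)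

lemma nmat_in_Bor: "nmat x y z \<in> Bor"
  by (simp add: Bor_iff matrices_M3)

lemma Bor_mult: "p \<in> Bor \<Longrightarrow> q \<in> Bor \<Longrightarrow> p ** q \<in> Bor"
  unfolding Bor_def SL3_def
  by (simp add: det_mul, subst (1 2 3) M3_eta[of p], subst (1 2 3) M3_eta[of q]) simp

lemma Bor_inverse:
  assumes "q \<in> Bor"
  obtains q' where "q' \<in> Bor" "q' ** q = mat 1" "q ** q' = mat 1"
proof -
  obtain a b c d e f where q: "q = M3 a b c 0 d e 0 0 f" "a*d*f = 1"
    using assms by (auto simp: Bor_iff)
  then have nz: "a \<noteq> 0" "d \<noteq> 0" "f \<noteq> 0" by auto
  define q' where "q' = M3 (1/a) (-b/(a*d)) ((b*e - c*d)/(a*d*f)) 0 (1/d) (-e/(d*f)) 0 0 (1/f)"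
  have "q' \<in> Bor" unfolding Bor_def SL3_def q'_def using q(2) nz by (simp add: field_simps)
  moreover have "q' ** q = mat 1" "q ** q' = mat 1"
    unfolding q'_def q(1) mat1_M3 using nz by (simp_all add: field_simps)
  ultimately show ?thesis by (rule that)
qed

lemma Bor_right_translate: "q \<in> Bor \<Longrightarrow> (\<lambda>p. p ** q) ` Bor = Bor"
proof (intro equalityI subsetI)
  assume q: "q \<in> Bor"
  then obtain q' where q': "q' \<in> Bor" "q' ** q = mat 1" by (rule Bor_inverse)
  fix p assume "p \<in> Bor"
  with q' have "p ** q' \<in> Bor" "p = (p ** q') ** q"
    by (auto simp: Bor_mult simp flip: matrix_mul_assoc)
  then show "p \<in> (\<lambda>p. p ** q) ` Bor" by blast
qed (auto simp: Bor_mult)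

lemma rcos_mult_left: "q \<in> Bor \<Longrightarrow> rcos (q ** b) = rcos b"
proof -
  assume q: "q \<in> Bor"
  have "rcos (q ** b) = (\<lambda>p. p ** b) ` ((\<lambda>p. p ** q) ` Bor)"
    unfolding rcos_def by (simp add: image_image matrix_mul_assoc)
  then show ?thesis using Bor_right_translate[OF q] by (simp add: rcos_def)
qed

lemma rcos_eqE:
  assumes "rcos a = rcos b"
  obtains p where "p \<in> Bor" "a = p ** b"
proof -
  have "a \<in> rcos a" unfolding rcos_def using mat1_in_Bor by force
  with assms that show ?thesis unfolding rcos_def by auto
qed

lemma rcos_dcos:
  assumes "q \<in> dcos v"
  obtains p where "p \<in> Bor" "rcos (q ** g) = rcos (v ** p ** g)"
proof -
  obtain p' p where "p' \<in> Bor" "p \<in> Bor" "q = p' ** v ** p"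
    using assms unfolding dcos_def by blast
  with that show ?thesis by (metis matrix_mul_assoc rcos_mult_left)
qed

lemma w0_dmat: "w0 ** dmat a d f = dmat f d a ** w0"
  by (simp add: matrices_M3)

lemma Bor_w0_conj_diagonal:
  assumes "w0 ** p = q ** w0" "p \<in> Bor" "q \<in> Bor"
  obtains a d f where "p = dmat a d f" "a*d*f = 1"
  using assms by (auto simp: Bor_iff matrices_M3)

lemma Diag_subset_SL3: "Diag \<subseteq> SL3"
  by (auto simp: Diag_def)

lemma dmat_in_Diag: "a*b*c = 1 \<Longrightarrow> dmat a b c \<in> Diag"
  by (simp add: Diag_def SL3_def matrices_M3 forall_3)

lemma Diag_eq: "Diag = {dmat a d f | a d f. a*d*f = 1}"
proof (intro set_eqI iffI)
  fix M assume "M \<in> Diag"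
  then have "M = dmat (M$1$1) (M$2$2) (M$3$3)" "M$1$1 * M$2$2 * M$3$3 = 1"
    unfolding Diag_def SL3_def by (subst M3_eta, auto simp: matrices_M3 det_3)
  then show "M \<in> {dmat a d f | a d f. a*d*f = 1}" by blast
qed (auto intro: dmat_in_Diag)

subsection \<open>Orbits of the base points\<close>

lemma act_rcos: "act (rcos a, rcos b, rcos c) g = (rcos (a**g), rcos (b**g), rcos (c**g))"
  unfolding act_def rcos_def by (simp add: image_image matrix_mul_assoc)

lemma act_basept: "act (basept n) g = (rcos g, rcos (w0**g), rcos (z2**n**g))"
  unfolding basept_def by (simp add: act_rcos)

lemma act_basept_eqE:
  assumes eq: "act (basept (nmat 0 y z)) g = act (basept (nmat 0 y' z')) g'"
    and g': "g' \<in> SL3"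
  obtains a d f where "g = dmat a d f ** g'" "a*d*f = 1" "a*y' = y*f" "d*z' = z*f"
proof -
  have cancel: "A ** g' = B ** g' \<Longrightarrow> A = B" for A B
    using g' matrix_mul_right_cancel[of g'] by (simp add: SL3_def)
  from eq have e1: "rcos g = rcos g'" and e2: "rcos (w0**g) = rcos (w0**g')"
    and e3: "rcos (z2**nmat 0 y z**g) = rcos (z2**nmat 0 y' z'**g')"
    by (simp_all add: act_basept)
  obtain p where p: "p \<in> Bor" "g = p ** g'" using e1 by (rule rcos_eqE)
  obtain q where q: "q \<in> Bor" "w0 ** g = q ** (w0 ** g')" using e2 by (rule rcos_eqE)
  have "w0 ** p = q ** w0"
    using p q cancel[of "w0 ** p" "q ** w0"] by (simp add: matrix_mul_assoc)
  then obtain a d f where adf: "p = dmat a d f" "a*d*f = 1"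
    using p q by (elim Bor_w0_conj_diagonal)
  obtain r where r: "r \<in> Bor" "z2**nmat 0 y z**g = r ** (z2**nmat 0 y' z'**g')"
    using e3 by (rule rcos_eqE)
  have "z2 ** nmat 0 y z ** dmat a d f = r ** (z2 ** nmat 0 y' z')"
    using r p adf cancel[of "z2 ** nmat 0 y z ** dmat a d f" "r ** (z2 ** nmat 0 y' z')"]
    by (simp add: matrix_mul_assoc)
  then have "a*y' = y*f" "d*z' = z*f"
    using r by (auto simp: Bor_iff matrices_M3)
  with p adf that show ?thesis by blast
qed

lemma stab_basept:
  "stab (basept (nmat 0 y z)) = {dmat a d f | a d f. a*d*f = 1 \<and> a*y = y*f \<and> d*z = z*f}"
proof (intro set_eqI iffI)
  fix g assume "g \<in> stab (basept (nmat 0 y z))"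
  moreover have "act (basept n) (mat 1) = basept n" for n
    unfolding act_basept by (simp add: basept_def)
  ultimately have "act (basept (nmat 0 y z)) g = act (basept (nmat 0 y z)) (mat 1)"
    by (simp add: stab_def)
  then obtain a d f where "g = dmat a d f ** mat 1" "a*d*f = 1" "a*y = y*f" "d*z = z*f"
    by (rule act_basept_eqE) (simp add: SL3_def)
  then show "g \<in> {dmat a d f | a d f. a*d*f = 1 \<and> a*y = y*f \<and> d*z = z*f}" by auto
next
  fix g assume "g \<in> {dmat a d f | a d f. a*d*f = 1 \<and> a*y = y*f \<and> d*z = z*f}"
  then obtain a d f where g: "g = dmat a d f" "a*d*f = 1" "a*y = y*f" "d*z = z*f" by auto
  have "f*d*a = 1" "f*a*d = 1" using g(2) by (simp_all add: ac_simps)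
  have "rcos g = rcos (mat 1)"
    using rcos_mult_left[OF dmat_in_Bor[OF g(2)], of "mat 1"] g(1) by simp
  moreover have "rcos (w0 ** g) = rcos w0"
    using rcos_mult_left[OF dmat_in_Bor[OF \<open>f*d*a = 1\<close>], of w0] g(1) by (simp add: w0_dmat)
  moreover have "z2 ** nmat 0 y z ** g = dmat f a d ** (z2 ** nmat 0 y z)"
    using g by (auto simp: matrices_M3 mult.commute)
  then have "rcos (z2 ** nmat 0 y z ** g) = rcos (z2 ** nmat 0 y z)"
    using rcos_mult_left[OF dmat_in_Bor[OF \<open>f*a*d = 1\<close>]] by simp
  moreover have "g \<in> SL3" using g by (simp add: SL3_def matrices_M3)
  ultimately show "g \<in> stab (basept (nmat 0 y z))"
    unfolding stab_def act_basept by (simp add: basept_def)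
qed

lemma orbit_basept_disjoint:
  assumes "(y = 0) \<noteq> (y' = 0) \<or> (z = 0) \<noteq> (z' = 0)"
  shows "orbit (basept (nmat 0 y z)) \<inter> orbit (basept (nmat 0 y' z')) = {}"
proof (rule ccontr)
  assume "orbit (basept (nmat 0 y z)) \<inter> orbit (basept (nmat 0 y' z')) \<noteq> {}"
  then obtain g g' where "act (basept (nmat 0 y z)) g = act (basept (nmat 0 y' z')) g'" "g' \<in> SL3"
    unfolding orbit_def by (metis (no_types, lifting) disjoint_iff imageE)
  then obtain a d f where "a*d*f = 1" "a*y' = y*f" "d*z' = z*f" by (rule act_basept_eqE)
  with assms show False by auto
qed

subsection \<open>Decomposition of the cell\<close>

text \<open>The matrix \<open>p\<close> is forced to be \<open>z2 b (z2 n(0,y,z) d)\<inverse>\<close>; the two equations are what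
  makes it upper triangular.\<close>

lemma z2_Bor_reduce:
  assumes b: "b = M3 b1 b2 b3 0 b4 b5 0 0 b6" "b1*b4*b6 = 1" and adf: "a*d*f = 1"
    and eq1: "b1*(-y/a) + b2*(-z/d) + b3/f = 0" and eq2: "b4*(-z/d) + b5/f = 0"
  obtains p where "p \<in> Bor" "z2 ** b = p ** (z2 ** nmat 0 y z ** dmat a d f)"
proof
  have "a \<noteq> 0" "d \<noteq> 0" "f \<noteq> 0" using adf by auto
  define p where
    "p = z2 ** b ** dmat (1/a) (1/d) (1/f) ** nmat 0 (-y) (-z) ** M3 0 (-1) 0 0 0 (-1) 1 0 0"
  show "p \<in> Bor" unfolding p_def Bor_def SL3_def using b \<open>a \<noteq> 0\<close> \<open>d \<noteq> 0\<close> \<open>f \<noteq> 0\<close> eq1 eq2 adf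
    by (simp add: matrices_M3 field_simps)
  show "z2 ** b = p ** (z2 ** nmat 0 y z ** dmat a d f)"
    unfolding p_def using b \<open>a \<noteq> 0\<close> \<open>d \<noteq> 0\<close> \<open>f \<noteq> 0\<close> by (simp add: matrices_M3 field_simps)
qed

lemma real_cube_root: "r \<noteq> 0 \<Longrightarrow> \<exists>f::real. f^3 = r \<and> f \<noteq> 0"
  by (rule exI[of _ "root 3 r"]) (simp add: odd_real_root_pow)

lemma z2_Bor_normal_form:
  assumes "b \<in> Bor"
  obtains y z a d f p where "y \<in> {0,1}" "z \<in> {0,1}" "a*d*f = 1" "p \<in> Bor"
    "z2 ** b = p ** (z2 ** nmat 0 y z ** dmat a d f)"
proof -
  obtain b1 b2 b3 b4 b5 b6 where b: "b = M3 b1 b2 b3 0 b4 b5 0 0 b6" "b1*b4*b6 = 1"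
    using assms unfolding Bor_iff by blast
  have nz: "b1 \<noteq> 0" "b4 \<noteq> 0" "b6 \<noteq> 0" using b by auto
  consider "b5 = 0" "b3 = 0" | "b5 = 0" "b3 \<noteq> 0" | "b5 \<noteq> 0" "b3*b4 - b2*b5 = 0"
    | "b5 \<noteq> 0" "b3*b4 - b2*b5 \<noteq> 0" by blast
  then show ?thesis
  proof cases
    case 1
    have adf: "1*1*1 = (1::real)" by simp
    have "b1*(-0/1) + b2*(-0/1) + b3/1 = 0" "b4*(-0/1) + b5/1 = 0" using 1 by simp_all
    then show ?thesis by (rule z2_Bor_reduce[OF b adf]) (auto intro: that[of 0 0, OF _ _ adf])
  next
    case 2
    obtain f where f: "f^3 = b3/b1" "f \<noteq> 0" using real_cube_root[of "b3/b1"] 2 nz by auto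
    have adf: "(b1*f/b3)*f*f = 1" using f 2 nz by (simp add: field_simps power3_eq_cube)
    have "b1*(-1/(b1*f/b3)) + b2*(-0/f) + b3/f = 0" "b4*(-0/f) + b5/f = 0"
      using f 2 nz by (simp_all add: field_simps)
    then show ?thesis by (rule z2_Bor_reduce[OF b adf]) (auto intro: that[of 1 0, OF _ _ adf])
  next
    case 3
    obtain f where f: "f^3 = b5/b4" "f \<noteq> 0" using real_cube_root[of "b5/b4"] 3 nz by auto
    have adf: "f*(b4*f/b5)*f = 1" using f 3 nz by (simp add: field_simps power3_eq_cube)
    have "b1*(-0/f) + b2*(-1/(b4*f/b5)) + b3/f = 0" "b4*(-1/(b4*f/b5)) + b5/f = 0"
      using f 3 nz by (simp_all add: field_simps)
    then show ?thesis by (rule z2_Bor_reduce[OF b adf]) (auto intro: that[of 0 1, OF _ _ adf])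
  next
    case 4
    define k where "k = b3*b4 - b2*b5"
    have k: "k \<noteq> 0" using 4 k_def by simp
    obtain f where f: "f^3 = k*b5/(b1*b4^2)" "f \<noteq> 0"
      using real_cube_root[of "k*b5/(b1*b4^2)"] 4 nz k by auto
    have adf: "(b1*b4*f/k)*(b4*f/b5)*f = 1"
      using f 4 nz k by (simp add: field_simps power3_eq_cube power2_eq_square)
    have "b1*(-1/(b1*b4*f/k)) + b2*(-1/(b4*f/b5)) + b3/f = 0" "b4*(-1/(b4*f/b5)) + b5/f = 0"
      using f 4 nz k by (simp_all add: field_simps k_def)
    then show ?thesis by (rule z2_Bor_reduce[OF b adf]) (auto intro: that[of 1 1, OF _ _ adf])
  qed
qed

lemma schubert_subset_orbits:
  assumes "x \<in> schubert w0 z2"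
  shows "\<exists>y\<in>{0,1}. \<exists>z\<in>{0,1}. x \<in> orbit (basept (nmat 0 y z))"
proof -
  obtain q1 q2 g where x: "x = act (rcos (mat 1), rcos q1, rcos q2) g"
    and q: "q1 \<in> dcos w0" "q2 \<in> dcos z2" and g: "g \<in> SL3"
    using assms unfolding schubert_def by blast
  obtain p1 where p1: "p1 \<in> Bor" "rcos (q1 ** g) = rcos (w0 ** p1 ** g)"
    using q(1) by (rule rcos_dcos)
  obtain p2 where p2: "p2 \<in> Bor" "rcos (q2 ** g) = rcos (z2 ** p2 ** g)"
    using q(2) by (rule rcos_dcos)
  obtain i1 where i1: "i1 \<in> Bor" "i1 ** p1 = mat 1" using p1(1) by (rule Bor_inverse)
  obtain y z a d f p where yz: "y \<in> {0,1}" "z \<in> {0,1}" and adf: "a*d*f = 1" and p: "p \<in> Bor"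
    and red: "z2 ** (p2 ** i1) = p ** (z2 ** nmat 0 y z ** dmat a d f)"
    using Bor_mult[OF p2(1) i1(1)] by (rule z2_Bor_normal_form)
  define h where "h = dmat a d f ** p1 ** g"
  have dp1: "dmat a d f ** p1 \<in> Bor" using Bor_mult dmat_in_Bor[OF adf] p1(1) by blast
  have "h \<in> SL3" using dp1 g Bor_subset_SL3 unfolding h_def SL3_def by (auto simp: det_mul)
  have "rcos (w0 ** h) = rcos (dmat f d a ** (w0 ** p1 ** g))"
    unfolding h_def by (metis matrix_mul_assoc w0_dmat)
  also have "\<dots> = rcos (w0 ** p1 ** g)"
    using adf by (intro rcos_mult_left dmat_in_Bor) (simp add: ac_simps)
  finally have c2: "rcos (w0 ** h) = rcos (q1 ** g)" using p1(2) by simp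
  have "z2 ** p2 ** g = z2 ** (p2 ** i1) ** p1 ** g"
    using i1 by (metis matrix_mul_assoc matrix_mul_rid)
  also have "\<dots> = p ** (z2 ** nmat 0 y z ** h)" unfolding red h_def by (simp add: matrix_mul_assoc)
  finally have c3: "rcos (z2 ** nmat 0 y z ** h) = rcos (q2 ** g)"
    using p2(2) rcos_mult_left[OF p] by simp
  have "x = act (basept (nmat 0 y z)) h"
    using c2 c3 rcos_mult_left[OF dp1] by (simp add: x act_basept act_rcos h_def matrix_mul_assoc)
  with \<open>h \<in> SL3\<close> yz show ?thesis unfolding orbit_def by blast
qed

lemma orbit_basept_subset_schubert: "orbit (basept (nmat 0 y z)) \<subseteq> schubert w0 z2"
proof
  fix x assume "x \<in> orbit (basept (nmat 0 y z))"
  then obtain g where g: "g \<in> SL3" "x = act (basept (nmat 0 y z)) g" unfolding orbit_def by blast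
  have "w0 \<in> dcos w0" "z2 ** nmat 0 y z \<in> dcos z2"
    unfolding dcos_def using mat1_in_Bor nmat_in_Bor by force+
  with g show "x \<in> schubert w0 z2" unfolding schubert_def basept_def by blast
qed

lemma schubert_w0_z2:
  "schubert w0 z2 = orbit (basept (nmat 0 1 1)) \<union> orbit (basept (nmat 0 0 1))
     \<union> orbit (basept (nmat 0 1 0)) \<union> orbit (basept (nmat 0 0 0))"
  using schubert_subset_orbits orbit_basept_subset_schubert by blast

lemma stab_basept_11: "stab (basept (nmat 0 1 1)) = {mat 1}"
  unfolding stab_basept
proof (intro set_eqI iffI)
  fix M assume "M \<in> {dmat a d f | a d f. a*d*f = 1 \<and> a*1 = 1*f \<and> d*1 = 1*f}"
  then obtain f where "M = dmat f f f" "f^3 = 1" by (auto simp: power3_eq_cube)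
  moreover from \<open>f^3 = 1\<close> have "f = 1" using odd_real_root_unique[of 3 f 1] by simp
  ultimately show "M \<in> {mat 1}" by (simp add: matrices_M3 mat1_M3)
next
  fix M :: mat3 assume "M \<in> {mat 1}"
  then have "M = dmat 1 1 1" by (simp add: matrices_M3 mat1_M3)
  then show "M \<in> {dmat a d f | a d f. a*d*f = 1 \<and> a*1 = 1*f \<and> d*1 = 1*f}" by auto
qed

lemma stab_basept_01: "stab (basept (nmat 0 0 1)) = {dmat (1 / a^2) a a | a. a \<noteq> 0}"
proof -
  have "a*d*f = 1 \<and> d = f \<longleftrightarrow> f \<noteq> 0 \<and> a = 1 / f^2 \<and> d = f" for a d f :: real
    by (cases "f = 0") (auto simp: field_simps power2_eq_square)
  then show ?thesis unfolding stab_basept by auto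
qed

lemma stab_basept_10: "stab (basept (nmat 0 1 0)) = {dmat a (1 / a^2) a | a. a \<noteq> 0}"
proof -
  have "a*d*f = 1 \<and> a = f \<longleftrightarrow> f \<noteq> 0 \<and> d = 1 / f^2 \<and> a = f" for a d f :: real
    by (cases "f = 0") (auto simp: field_simps power2_eq_square)
  then show ?thesis unfolding stab_basept by auto
qed

lemma stab_basept_00: "stab (basept (nmat 0 0 0)) = Diag"
  by (simp add: stab_basept Diag_eq)

subsection \<open>Tangent spaces\<close>

lemma has_field_derivative_entry:
  "(c has_vector_derivative X) (at 0) \<Longrightarrow> ((\<lambda>t. c t $ i $ j) has_field_derivative X $ i $ j) (at 0)"
  using bounded_linear.has_vector_derivative[of "\<lambda>M. M $ i $ j" c X]
  by (simp add: bounded_linear_compose[OF bounded_linear_vec_nth bounded_linear_vec_nth]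
      has_real_derivative_iff_has_vector_derivative)

lemma lie_tangent_const_deriv_zero:
  assumes "X \<in> lie_tangent H" and const: "\<And>M. M \<in> H \<Longrightarrow> F M = k"
    and deriv: "\<And>c. (c has_vector_derivative X) (at 0) \<Longrightarrow> c 0 = mat 1 \<Longrightarrow>
      ((\<lambda>t. F (c t)) has_field_derivative D) (at 0)"
  shows "D = 0"
proof -
  obtain c e where c: "e > 0" "\<forall>t. \<bar>t\<bar> < e \<longrightarrow> c t \<in> H" "c 0 = mat 1"
    "(c has_vector_derivative X) (at 0)"
    using assms(1) unfolding lie_tangent_def by blast
  have "eventually (\<lambda>t. t \<in> ball 0 e) (nhds (0::real))"
    using c(1) by (intro eventually_nhds_in_open) auto
  then have "eventually (\<lambda>t. F (c t) = k) (nhds (0::real))"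
    by (rule eventually_mono) (use c(2) const in \<open>auto simp: dist_real_def\<close>)
  then have "((\<lambda>t. F (c t)) has_field_derivative 0) (at 0)"
    using DERIV_cong_ev[of 0 0 "\<lambda>t. F (c t)" "\<lambda>t. k" 0 0] by simp
  with deriv[OF c(4,3)] show ?thesis using DERIV_unique by blast
qed

lemma lie_tangent_entry_const:
  "X \<in> lie_tangent H \<Longrightarrow> (\<And>M. M \<in> H \<Longrightarrow> M $ i $ j = k) \<Longrightarrow> X $ i $ j = 0"
  by (rule lie_tangent_const_deriv_zero[where F = "\<lambda>M. M $ i $ j"]) (auto intro: has_field_derivative_entry)

lemma lie_tangent_entries_eq:
  assumes "X \<in> lie_tangent H" "\<And>M. M \<in> H \<Longrightarrow> M $ i $ j = M $ k $ l"
  shows "X $ i $ j = X $ k $ l"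
proof -
  have "X $ i $ j - X $ k $ l = 0"
    by (rule lie_tangent_const_deriv_zero[OF assms(1), where F = "\<lambda>M. M $ i $ j - M $ k $ l" and k = 0])
      (auto simp: assms(2) intro!: derivative_eq_intros has_field_derivative_entry)
  then show ?thesis by simp
qed

lemma lie_tangent_SL3_trace: "X \<in> lie_tangent SL3 \<Longrightarrow> X$1$1 + X$2$2 + X$3$3 = 0"
  by (rule lie_tangent_const_deriv_zero[where F = det and k = 1])
    (auto simp: SL3_def det_3 mat1_M3 intro!: derivative_eq_intros has_field_derivative_entry)

lemma lie_tangent_mono: "H \<subseteq> K \<Longrightarrow> lie_tangent H \<subseteq> lie_tangent K"
  unfolding lie_tangent_def by blast

lemma lie_tangent_diagonal:
  assumes "H \<subseteq> Diag" "X \<in> lie_tangent H"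
  shows "X = dmat (X$1$1) (X$2$2) (X$3$3)" "X$1$1 + X$2$2 + X$3$3 = 0"
proof -
  have "\<And>M i j. M \<in> H \<Longrightarrow> i \<noteq> j \<Longrightarrow> M $ i $ j = 0" using assms(1) by (auto simp: Diag_def)
  then have "X $ i $ j = 0" if "i \<noteq> j" for i j
    using that by (intro lie_tangent_entry_const[OF assms(2)])
  then show "X = dmat (X$1$1) (X$2$2) (X$3$3)" by (subst M3_eta) (simp add: matrices_M3)
  have "X \<in> lie_tangent SL3" using assms lie_tangent_mono Diag_subset_SL3 by blast
  then show "X$1$1 + X$2$2 + X$3$3 = 0" by (rule lie_tangent_SL3_trace)
qed

lemma curve_in_lie_tangent:
  "(\<And>t. c t \<in> H) \<Longrightarrow> c 0 = mat 1 \<Longrightarrow> (c has_vector_derivative X) (at 0) \<Longrightarrow> X \<in> lie_tangent H"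
  unfolding lie_tangent_def by (rule CollectI, rule exI[of _ c], rule exI[of _ 1]) simp

lemma line_in_lie_tangent: "(\<And>t. mat 1 + t *\<^sub>R N \<in> H) \<Longrightarrow> N \<in> lie_tangent H"
  by (rule curve_in_lie_tangent[of "\<lambda>t. mat 1 + t *\<^sub>R N"]) (auto intro!: derivative_eq_intros)

lemma diag_exp_in_lie_tangent:
  assumes "\<And>t. dmat (exp (p*t)) (exp (q*t)) (exp (r*t)) \<in> H"
  shows "dmat p q r \<in> lie_tangent H"
proof (rule curve_in_lie_tangent)
  let ?c = "\<lambda>t. exp (p*t) *\<^sub>R dmat 1 0 0 + exp (q*t) *\<^sub>R dmat 0 1 0 + exp (r*t) *\<^sub>R dmat 0 0 1"
  show "?c t \<in> H" for t using assms[of t] by (simp add: matrices_M3)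
  show "?c 0 = mat 1" by (simp add: matrices_M3 mat1_M3)
  have "(?c has_vector_derivative p *\<^sub>R dmat 1 0 0 + q *\<^sub>R dmat 0 1 0 + r *\<^sub>R dmat 0 0 1) (at 0)"
    by (auto intro!: derivative_eq_intros)
  then show "(?c has_vector_derivative dmat p q r) (at 0)" by (simp add: matrices_M3)
qed

lemma strictly_triangular_in_lie_tangent_SL3:
  "M3 0 b c 0 0 f 0 0 0 \<in> lie_tangent SL3" "M3 0 0 0 d 0 0 g h 0 \<in> lie_tangent SL3"
  by (rule line_in_lie_tangent, simp add: SL3_def mat1_M3)+

lemma torus_basis_in_lie_tangent_Diag:
  "dmat 1 (-1) 0 \<in> lie_tangent Diag" "dmat 1 1 (-2) \<in> lie_tangent Diag"
  by (rule diag_exp_in_lie_tangent, rule dmat_in_Diag, simp flip: exp_add)+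

subsection \<open>Dimensions\<close>

lemma dim_lie_tangent_SL3: "dim (lie_tangent SL3) = 8"
proof (rule dim_unique)
  let ?B = "{M3 0 1 0 0 0 0 0 0 0, M3 0 0 1 0 0 0 0 0 0, M3 0 0 0 0 0 1 0 0 0, M3 0 0 0 1 0 0 0 0 0,
     M3 0 0 0 0 0 0 1 0 0, M3 0 0 0 0 0 0 0 1 0, dmat 1 (-1) 0, dmat 1 1 (-2)}"
  show "card ?B = 8" by (simp add: matrices_M3)
  show "independent ?B"
    by (rule pairwise_orthogonal_independent)
      (auto simp: pairwise_insert orthogonal_def zero_M3 matrices_M3)
  show "?B \<subseteq> lie_tangent SL3"
    using strictly_triangular_in_lie_tangent_SL3 torus_basis_in_lie_tangent_Diag
      lie_tangent_mono[OF Diag_subset_SL3] by auto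
  show "lie_tangent SL3 \<subseteq> span ?B"
  proof
    fix X assume "X \<in> lie_tangent SL3"
    then have tr: "X$1$1 + X$2$2 + X$3$3 = 0" by (rule lie_tangent_SL3_trace)
    have "X = X$1$2 *\<^sub>R M3 0 1 0 0 0 0 0 0 0 + X$1$3 *\<^sub>R M3 0 0 1 0 0 0 0 0 0
       + X$2$3 *\<^sub>R M3 0 0 0 0 0 1 0 0 0 + X$2$1 *\<^sub>R M3 0 0 0 1 0 0 0 0 0
       + X$3$1 *\<^sub>R M3 0 0 0 0 0 0 1 0 0 + X$3$2 *\<^sub>R M3 0 0 0 0 0 0 0 1 0
       + (X$1$1 + X$3$3/2) *\<^sub>R dmat 1 (-1) 0 + (- X$3$3/2) *\<^sub>R dmat 1 1 (-2)"
      using tr by (subst M3_eta) (simp add: matrices_M3)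
    also have "\<dots> \<in> span ?B" by (intro span_add span_scale span_base) auto
    finally show "X \<in> span ?B" .
  qed
qed

lemma dim_lie_tangent_Diag: "dim (lie_tangent Diag) = 2"
proof (rule dim_unique)
  let ?B = "{dmat 1 (-1) 0, dmat 1 1 (-2)}"
  show "card ?B = 2" by (simp add: matrices_M3)
  show "independent ?B"
    by (rule pairwise_orthogonal_independent)
      (auto simp: pairwise_insert orthogonal_def zero_M3 matrices_M3)
  show "?B \<subseteq> lie_tangent Diag" using torus_basis_in_lie_tangent_Diag by simp
  show "lie_tangent Diag \<subseteq> span ?B"
  proof
    fix X assume "X \<in> lie_tangent Diag"
    note X = lie_tangent_diagonal[OF order_refl this]
    have "X = (X$1$1 + X$3$3/2) *\<^sub>R dmat 1 (-1) 0 + (- X$3$3/2) *\<^sub>R dmat 1 1 (-2)"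
      using X(2) by (subst X(1)) (simp add: matrices_M3)
    also have "\<dots> \<in> span ?B" by (intro span_add span_scale span_base) auto
    finally show "X \<in> span ?B" .
  qed
qed

lemma dim_lie_tangent_trivial: "dim (lie_tangent {mat 1}) = 0"
proof (rule dim_unique[of "{}"])
  show "lie_tangent {mat 1} \<subseteq> span {}"
  proof
    fix X assume "X \<in> lie_tangent {mat 1}"
    then have "X $ i $ j = 0" for i j by (rule lie_tangent_entry_const) simp
    then show "X \<in> span {}" by (simp add: vec_eq_iff)
  qed
qed (auto simp: independent_empty)

lemma dim_lie_tangent_torus_1:
  "dim (lie_tangent {dmat (1 / a^2) a a | a. a \<noteq> 0}) = 1"
proof (rule dim_unique[of "{dmat (-2) 1 1}"])
  let ?H = "{dmat (1 / a^2) a a | a. a \<noteq> 0}"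
  have "dmat (exp (-2*t)) (exp (1*t)) (exp (1*t)) \<in> ?H" for t
    by (rule CollectI, rule exI[of _ "exp t"]) (simp add: exp_minus power2_eq_square inverse_eq_divide flip: exp_add)
  then show "{dmat (-2) 1 1} \<subseteq> lie_tangent ?H" by (simp add: diag_exp_in_lie_tangent)
  show "lie_tangent ?H \<subseteq> span {dmat (-2) 1 1}"
  proof
    fix X assume X: "X \<in> lie_tangent ?H"
    have "?H \<subseteq> Diag" by (auto intro!: dmat_in_Diag simp: power2_eq_square)
    note D = lie_tangent_diagonal[OF this X]
    have "X$2$2 = X$3$3" by (rule lie_tangent_entries_eq[OF X]) (auto simp: matrices_M3)
    with D(2) have "X = X$2$2 *\<^sub>R dmat (-2) 1 1" by (subst D(1)) (simp add: matrices_M3)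
    then show "X \<in> span {dmat (-2) 1 1}" by (metis span_base span_scale singletonI)
  qed
qed (auto simp: matrices_M3 zero_M3)

lemma dim_lie_tangent_torus_2:
  "dim (lie_tangent {dmat a (1 / a^2) a | a. a \<noteq> 0}) = 1"
proof (rule dim_unique[of "{dmat 1 (-2) 1}"])
  let ?H = "{dmat a (1 / a^2) a | a. a \<noteq> 0}"
  have "dmat (exp (1*t)) (exp (-2*t)) (exp (1*t)) \<in> ?H" for t
    by (rule CollectI, rule exI[of _ "exp t"]) (simp add: exp_minus power2_eq_square inverse_eq_divide flip: exp_add)
  then show "{dmat 1 (-2) 1} \<subseteq> lie_tangent ?H" by (simp add: diag_exp_in_lie_tangent)
  show "lie_tangent ?H \<subseteq> span {dmat 1 (-2) 1}"
  proof
    fix X assume X: "X \<in> lie_tangent ?H"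
    have "?H \<subseteq> Diag" by (auto intro!: dmat_in_Diag simp: power2_eq_square)
    note D = lie_tangent_diagonal[OF this X]
    have "X$1$1 = X$3$3" by (rule lie_tangent_entries_eq[OF X]) (auto simp: matrices_M3)
    with D(2) have "X = X$1$1 *\<^sub>R dmat 1 (-2) 1" by (subst D(1)) (simp add: matrices_M3)
    then show "X \<in> span {dmat 1 (-2) 1}" by (metis span_base span_scale singletonI)
  qed
qed (auto simp: matrices_M3 zero_M3)

theorem mainTheorem7:
  shows "(schubert w0 z2 = (orbit (basept (nmat 0 1 1)) \<union> orbit (basept (nmat 0 0 1))
            \<union> orbit (basept (nmat 0 1 0)) \<union> orbit (basept (nmat 0 0 0))) \<and>
     orbit (basept (nmat 0 1 1)) \<inter> orbit (basept (nmat 0 0 1)) = {} \<and>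
     orbit (basept (nmat 0 1 1)) \<inter> orbit (basept (nmat 0 1 0)) = {} \<and>
     orbit (basept (nmat 0 1 1)) \<inter> orbit (basept (nmat 0 0 0)) = {} \<and>
     orbit (basept (nmat 0 0 1)) \<inter> orbit (basept (nmat 0 1 0)) = {} \<and>
     orbit (basept (nmat 0 0 1)) \<inter> orbit (basept (nmat 0 0 0)) = {} \<and>
     orbit (basept (nmat 0 1 0)) \<inter> orbit (basept (nmat 0 0 0)) = {} \<and>
     orbit_dim (basept (nmat 0 1 1)) = 8 \<and>
     stab (basept (nmat 0 1 1)) = {mat 1} \<and>
     orbit_dim (basept (nmat 0 0 1)) = 7 \<and>
     stab (basept (nmat 0 0 1)) = {dmat (1 / a^2) a a | a. a \<noteq> 0} \<and>
     orbit_dim (basept (nmat 0 1 0)) = 7 \<and>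
     stab (basept (nmat 0 1 0)) = {dmat a (1 / a^2) a | a. a \<noteq> 0} \<and>
     orbit_dim (basept (nmat 0 0 0)) = 6 \<and>
     stab (basept (nmat 0 0 0)) = Diag)"
  by (simp add: schubert_w0_z2 orbit_basept_disjoint orbit_dim_def dim_lie_tangent_SL3
      stab_basept_11 stab_basept_01 stab_basept_10 stab_basept_00 dim_lie_tangent_trivial
      dim_lie_tangent_torus_1 dim_lie_tangent_torus_2 dim_lie_tangent_Diag)

end
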